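(* Let $G=(V,E)$ be a rooted tree with root $t_0$, let $1\le p<\infty$, and let ${\bm\nu}=\{\nu_t\}_{t\in V}$, ${\bm\mu}=\{\mu_t\}_{t\in V}$ be two weights (positive sequences) over $V$ with $\sum_{t\in V}\nu_t<\infty$ and $\sum_{t\in V}\mu_t<\infty$. Suppose there is a constant $C$ such that for every sequence ${\bm b}=\{b_t\}_{t\in V}$, $$\Big(\sum_{t\in V}\nu_t\Big|\sum_{t_0\prec u\preceq t}b_u\Big|^p\Big)^{1/p}\le C\Big(\sum_{t\in V}\mu_t|b_t|^p\Big)^{1/p}.$$ Then there is a constant $C_P$, depending only on $C$ (and $p$), such that for every sequence ${\bm b}=\{b_t\}_{t\in V}$, $$\Big(\sum_{t\in V}|b_t-\bar b|^p\nu_t\Big)^{1/p}\le C_P\Big(\sum_{t\succ t_0}|b_t-b_{t_p}|^p\mu_t\Big)^{1/p},\qquad \bar b=\frac{\sum_{t\in V}b_t\nu_t}{\sum_{t\in V}\nu_t}.$$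
   Context: A tree is a connected graph without cycles; a rooted tree has a distinguished vertex $t_0$ (the root). The partial order $\preceq$ on $V$ is defined by $r\preceq t$ if $r$ lies on the unique path from $t$ to $t_0$; $r\prec t$ means $r\preceq t$ and $r\neq t$. For $t\neq t_0$, $t_p$ denotes the parent of $t$, i.e. the first vertex after $t$ on the path from $t$ to $t_0$. *)

theory Defs
  imports "HOL-Analysis.Analysis"
begin

definition is_gpath :: "('a \<Rightarrow> 'a \<Rightarrow> bool) \<Rightarrow> 'a list \<Rightarrow> bool" where
  "is_gpath E xs \<longleftrightarrow> xs \<noteq> [] \<and> distinct xs \<and>
     (\<forall>i. Suc i < length xs \<longrightarrow> E (xs ! i) (xs ! Suc i))"

definition is_tree :: "'a set \<Rightarrow> ('a \<Rightarrow> 'a \<Rightarrow> bool) \<Rightarrow> bool" where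
  "is_tree V E \<longleftrightarrow>
     (\<forall>x y. E x y \<longrightarrow> x \<in> V \<and> y \<in> V \<and> x \<noteq> y \<and> E y x) \<and>
     (\<forall>x\<in>V. \<forall>y\<in>V. \<exists>xs. is_gpath E xs \<and> hd xs = x \<and> last xs = y) \<and>
     (\<nexists>xs. is_gpath E xs \<and> 3 \<le> length xs \<and> E (last xs) (hd xs))"

definition rooted_tree :: "'a set \<Rightarrow> ('a \<Rightarrow> 'a \<Rightarrow> bool) \<Rightarrow> 'a \<Rightarrow> bool" where
  "rooted_tree V E t0 \<longleftrightarrow> is_tree V E \<and> t0 \<in> V"

definition tree_path :: "('a \<Rightarrow> 'a \<Rightarrow> bool) \<Rightarrow> 'a \<Rightarrow> 'a \<Rightarrow> 'a list" where
  "tree_path E t0 t = (THE xs. is_gpath E xs \<and> hd xs = t \<and> last xs = t0)"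

definition tree_le :: "('a \<Rightarrow> 'a \<Rightarrow> bool) \<Rightarrow> 'a \<Rightarrow> 'a \<Rightarrow> 'a \<Rightarrow> bool" where
  "tree_le E t0 r t \<longleftrightarrow> r \<in> set (tree_path E t0 t)"

definition tree_less :: "('a \<Rightarrow> 'a \<Rightarrow> bool) \<Rightarrow> 'a \<Rightarrow> 'a \<Rightarrow> 'a \<Rightarrow> bool" where
  "tree_less E t0 r t \<longleftrightarrow> tree_le E t0 r t \<and> r \<noteq> t"

text \<open>Parent t_p of t \<noteq> t0: the vertex after t on the path from t to t0.\<close>
definition tree_parent :: "('a \<Rightarrow> 'a \<Rightarrow> bool) \<Rightarrow> 'a \<Rightarrow> 'a \<Rightarrow> 'a" where
  "tree_parent E t0 t = tree_path E t0 t ! 1"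

end

theory Submission
  imports Defs
begin

text \<open>
  Apply the hypothesis to the edge differences \<open>d u = b u - b (tree_parent u)\<close>: along the path
  from \<open>t\<close> to the root they telescope to \<open>b t - b t0\<close>, so
  \<open>\<Sum> \<nu> |b - b t0|^p \<le> C^p \<Sum> \<mu> |d|^p\<close>. It remains to replace the constant \<open>b t0\<close> by the
  \<open>\<nu>\<close>-mean \<open>bbar\<close>; by Jensen's inequality the \<open>L^p(\<nu>)\<close> distance to the mean is at most twice
  the distance to any constant, which gives \<open>CP = 2 C + 1\<close>.
\<close>

lemma is_gpath_iff_successively:
  "is_gpath E xs \<longleftrightarrow> xs \<noteq> [] \<and> distinct xs \<and> successively E xs"
  unfolding is_gpath_def successively_conv_nth by blast

lemma distinct_hd_eq_last_imp_singleton: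
  assumes "distinct xs" "xs \<noteq> []" "hd xs = last xs"
  shows "xs = [hd xs]"
proof -
  have "xs ! 0 = xs ! (length xs - 1)"
    using assms(2,3) by (simp add: hd_conv_nth last_conv_nth)
  then have "0 = length xs - 1"
    using nth_eq_iff_index_eq[OF assms(1), of 0 "length xs - 1"] assms(2) by simp
  then have "length xs = 1"
    using assms(2) by (cases xs) auto
  then show ?thesis by (cases xs) auto
qed

lemma successively_append_Cons:
  "successively P (xs @ [z]) \<Longrightarrow> successively P (z # ys) \<Longrightarrow> successively P (xs @ z # ys)"
  by (induction xs) (auto simp: successively_Cons hd_append)

text \<open>Two paths leaving \<open>x\<close> through different first steps and ending at the same vertex close a
  cycle: follow the first one up to its first vertex \<open>z\<close> on the second, then the second back.\<close>

lemma two_gpaths_imp_cycle: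
  assumes sym: "\<forall>x y. E x y \<longrightarrow> E y x"
    and pA: "is_gpath E (x # A)" and pB: "is_gpath E (x # B)"
    and ne: "A \<noteq> []" "B \<noteq> []" and last_eq: "last A = last B" and hd_neq: "hd A \<noteq> hd B"
  shows "\<exists>xs. is_gpath E xs \<and> 3 \<le> length xs \<and> E (last xs) (hd xs)"
proof -
  have "\<exists>v\<in>set A. v \<in> set B" using ne last_eq by (metis last_in_set)
  then obtain A1 z A2 where A: "A = A1 @ z # A2" and zB: "z \<in> set B"
      and A1: "\<forall>y\<in>set A1. y \<notin> set B"
    using split_list_first_prop[of A "\<lambda>v. v \<in> set B"] by blast
  obtain B1 B2 where B: "B = B1 @ z # B2" and zB1: "z \<notin> set B1"
    using split_list_first[OF zB] by blast
  define cyc where "cyc = (x # A1) @ rev (B1 @ [z])"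
  have dA: "distinct (x # A)" and sA: "successively E (x # A)"
    using pA is_gpath_iff_successively by blast+
  have dB: "distinct (x # B)" and sB: "successively E (x # B)"
    using pB is_gpath_iff_successively by blast+
  have "distinct cyc" using dA dB A1 zB1 unfolding cyc_def A B by auto
  moreover have "3 \<le> length cyc"
  proof -
    have "A1 \<noteq> [] \<or> B1 \<noteq> []" using hd_neq A B by auto
    then show ?thesis unfolding cyc_def by (cases A1; cases B1) auto
  qed
  moreover have "successively E cyc"
  proof -
    have "successively E ((x # A1 @ [z]) @ A2)" using sA unfolding A by simp
    then have sA1: "successively E (x # A1 @ [z])" by (metis successively_append_iff)
    have "successively E ((x # B1 @ [z]) @ B2)" using sB unfolding B by simp
    then have "successively E (x # B1 @ [z])" by (metis successively_append_iff)
    then have "successively E (B1 @ [z])" by (simp add: successively_Cons)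
    then have "successively (\<lambda>a b. E b a) (B1 @ [z])"
      using sym by (blast intro: successively_mono)
    then have "successively E (rev (B1 @ [z]))" by (simp only: successively_rev)
    then show ?thesis
      unfolding cyc_def using successively_append_Cons[of E "x # A1" z "rev B1"] sA1 by simp
  qed
  moreover have "E (last cyc) (hd cyc)"
  proof -
    have "last cyc = hd B" unfolding cyc_def B by (cases B1) auto
    moreover have "E x (hd B)" using sB ne by (cases B) auto
    ultimately show ?thesis using sym by (simp add: cyc_def)
  qed
  ultimately show ?thesis unfolding is_gpath_iff_successively
    by (intro exI[of _ cyc]) (auto simp: cyc_def)
qed

lemma gpath_unique:
  assumes sym: "\<forall>x y. E x y \<longrightarrow> E y x"
    and acyclic: "\<nexists>xs. is_gpath E xs \<and> 3 \<le> length xs \<and> E (last xs) (hd xs)"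
  shows "is_gpath E P \<Longrightarrow> is_gpath E Q \<Longrightarrow> hd P = hd Q \<Longrightarrow> last P = last Q \<Longrightarrow> P = Q"
proof (induction P arbitrary: Q)
  case Nil
  then show ?case by (simp add: is_gpath_def)
next
  case (Cons x P')
  have dP: "distinct (x # P')" and sP: "successively E (x # P')"
    using Cons.prems is_gpath_iff_successively by blast+
  have dQ: "distinct Q" and sQ: "successively E Q" and "Q \<noteq> []"
    using Cons.prems is_gpath_iff_successively by blast+
  then obtain Q' where Q: "Q = x # Q'" using Cons.prems(3) by (cases Q) auto
  show ?case
  proof (cases "P' = []")
    case True
    then have "hd Q = last Q" using Cons.prems by simp
    then have "Q = [hd Q]" using distinct_hd_eq_last_imp_singleton dQ \<open>Q \<noteq> []\<close> by blast
    then show ?thesis using True Q by simp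
  next
    case False
    have "Q' \<noteq> []"
    proof
      assume "Q' = []"
      then have "last P' = x" using Cons.prems(4) Q False by simp
      then show False using dP False last_in_set by fastforce
    qed
    have gP': "is_gpath E P'" using dP sP False by (simp add: is_gpath_iff_successively successively_Cons)
    have gQ': "is_gpath E Q'" using dQ sQ \<open>Q' \<noteq> []\<close> Q by (simp add: is_gpath_iff_successively successively_Cons)
    have last_eq: "last P' = last Q'" using Cons.prems(4) Q False \<open>Q' \<noteq> []\<close> by simp
    show ?thesis
    proof (cases "hd P' = hd Q'")
      case True
      then show ?thesis using Cons.IH[OF gP' gQ' True last_eq] Q by simp
    next
      case False
      have "is_gpath E (x # P')" "is_gpath E (x # Q')" using Cons.prems(1,2) Q by simp_all
      from two_gpaths_imp_cycle[OF sym this \<open>P' \<noteq> []\<close> \<open>Q' \<noteq> []\<close> last_eq False] acyclic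
      show ?thesis by blast
    qed
  qed
qed

lemma tree_path_eqI:
  assumes "is_tree V E" "is_gpath E xs" "last xs = t0"
  shows "tree_path E t0 (hd xs) = xs"
  unfolding tree_path_def
proof (rule the_equality)
  show "is_gpath E xs \<and> hd xs = hd xs \<and> last xs = t0" using assms by simp
  fix ys assume "is_gpath E ys \<and> hd ys = hd xs \<and> last ys = t0"
  moreover have "\<forall>x y. E x y \<longrightarrow> E y x"
    and "\<nexists>xs. is_gpath E xs \<and> 3 \<le> length xs \<and> E (last xs) (hd xs)"
    using assms(1) unfolding is_tree_def by blast+
  ultimately show "ys = xs" using gpath_unique[of E ys xs] assms by simp
qed

lemma tree_path_from_to:
  assumes "rooted_tree V E t0" "t \<in> V"
  shows "is_gpath E (tree_path E t0 t)" "hd (tree_path E t0 t) = t" "last (tree_path E t0 t) = t0"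
proof -
  have T: "is_tree V E" "t0 \<in> V" using assms(1) unfolding rooted_tree_def by simp_all
  then obtain xs where "is_gpath E xs" "hd xs = t" "last xs = t0"
    using assms(2) unfolding is_tree_def by blast
  with tree_path_eqI[OF T(1)] show "is_gpath E (tree_path E t0 t)" "hd (tree_path E t0 t) = t"
      "last (tree_path E t0 t) = t0"
    by metis+
qed

lemma tree_path_drop:
  assumes "rooted_tree V E t0" "t \<in> V" "k < length (tree_path E t0 t)"
  shows "tree_path E t0 (tree_path E t0 t ! k) = drop k (tree_path E t0 t)"
proof -
  let ?P = "tree_path E t0 t"
  have "is_tree V E" using assms(1) unfolding rooted_tree_def by simp
  moreover have "is_gpath E (drop k ?P)"
    using tree_path_from_to(1)[OF assms(1,2)] assms(3) unfolding is_gpath_def by auto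
  moreover have "last (drop k ?P) = t0"
    using tree_path_from_to(3)[OF assms(1,2)] assms(3) by simp
  ultimately have "tree_path E t0 (hd (drop k ?P)) = drop k ?P" by (rule tree_path_eqI)
  then show ?thesis using assms(3) by (simp add: hd_drop_conv_nth)
qed

lemma set_tree_path_subset:
  assumes "rooted_tree V E t0" "t \<in> V"
  shows "set (tree_path E t0 t) \<subseteq> V"
proof
  let ?P = "tree_path E t0 t"
  fix u assume "u \<in> set ?P"
  then obtain k where k: "k < length ?P" "u = ?P ! k" by (metis in_set_conv_nth)
  show "u \<in> V"
  proof (cases "Suc k < length ?P")
    case True
    then have "E u (?P ! Suc k)" using tree_path_from_to(1)[OF assms] k unfolding is_gpath_def by blast
    then show ?thesis using assms(1) unfolding rooted_tree_def is_tree_def by blast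
  next
    case False
    then have "k = length ?P - 1" using k(1) by linarith
    moreover have "?P \<noteq> []" using k(1) by auto
    ultimately have "u = last ?P" using k(2) by (simp add: last_conv_nth)
    then show ?thesis using assms(1) tree_path_from_to(3)[OF assms] unfolding rooted_tree_def by simp
  qed
qed

lemma tree_ancestors_eq:
  assumes "rooted_tree V E t0" "t \<in> V"
  shows "{u\<in>V. tree_less E t0 t0 u \<and> tree_le E t0 u t} = set (tree_path E t0 t) - {t0}"
proof -
  have "tree_le E t0 t0 u" if "u \<in> V" for u
    unfolding tree_le_def
    using tree_path_from_to[OF assms(1) that] by (metis is_gpath_def last_in_set)
  then show ?thesis
    using set_tree_path_subset[OF assms] unfolding tree_less_def by (auto simp: tree_le_def)
qed

lemma sum_parent_differences_to_root:
  fixes b :: "'a \<Rightarrow> 'b::ab_group_add"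
  assumes rt: "rooted_tree V E t0" and t: "t \<in> V"
  shows "(\<Sum>u\<in>{u\<in>V. tree_less E t0 t0 u \<and> tree_le E t0 u t}. b u - b (tree_parent E t0 u)) = b t - b t0"
proof -
  define P where "P = tree_path E t0 t"
  define n where "n = length P - 1"
  have "P \<noteq> []" and dP: "distinct P"
    using tree_path_from_to(1)[OF rt t] unfolding P_def is_gpath_def by simp_all
  then have len: "length P = Suc n" unfolding n_def by (cases P) auto
  have P0: "P ! 0 = t" and Pn: "P ! n = t0"
    using tree_path_from_to(2,3)[OF rt t] \<open>P \<noteq> []\<close>
    by (simp_all add: P_def[symmetric] hd_conv_nth last_conv_nth n_def)
  have "set P - {t0} = (\<lambda>k. P ! k) ` {..<n}"
  proof (intro equalityI subsetI)
    fix u assume "u \<in> set P - {t0}"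
    then obtain k where "k < length P" "u = P ! k" "k \<noteq> n"
      using Pn by (metis DiffE in_set_conv_nth singletonI)
    then show "u \<in> (\<lambda>k. P ! k) ` {..<n}" using len by auto
  next
    fix u assume "u \<in> (\<lambda>k. P ! k) ` {..<n}"
    then show "u \<in> set P - {t0}" using dP len Pn by (auto simp: nth_eq_iff_index_eq)
  qed
  then have ancestors: "{u\<in>V. tree_less E t0 t0 u \<and> tree_le E t0 u t} = (\<lambda>k. P ! k) ` {..<n}"
    using tree_ancestors_eq[OF rt t] by (simp add: P_def)
  have inj: "inj_on (\<lambda>k. P ! k) {..<n}"
    using dP len by (auto simp: inj_on_def nth_eq_iff_index_eq)
  have parent: "tree_parent E t0 (P ! k) = P ! Suc k" if "k < n" for k
    using tree_path_drop[OF rt t, of k] that len by (simp add: tree_parent_def P_def)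
  have "(\<Sum>u\<in>{u\<in>V. tree_less E t0 t0 u \<and> tree_le E t0 u t}. b u - b (tree_parent E t0 u))
      = (\<Sum>k<n. b (P ! k) - b (P ! Suc k))"
    unfolding ancestors sum.reindex[OF inj] by (intro sum.cong) (auto simp: parent)
  also have "\<dots> = b t - b t0"
    using sum_lessThan_telescope'[of "\<lambda>k. b (P ! k)" n] P0 Pn by simp
  finally show ?thesis .
qed

lemma powr_tangent_le:
  fixes p x y :: real
  assumes p: "1 \<le> p" and x: "0 \<le> x" and y: "0 \<le> y"
  shows "y powr p + p * y powr (p - 1) * (x - y) \<le> x powr p"
proof (cases "y = 0")
  case True
  then show ?thesis by simp
next
  case False
  then have y_pos: "0 < y" using y by simp
  have y_powr: "y powr (p - 1) * y = y powr p"
    using y_pos by (simp add: powr_diff)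
  show ?thesis
  proof (cases "x = 0")
    case True
    have "y powr p + p * y powr (p - 1) * (x - y) = y powr p * (1 - p)"
      using True y_powr by (simp add: algebra_simps)
    also have "\<dots> \<le> 0" using p by (simp add: mult_nonneg_nonpos)
    finally show ?thesis using True by simp
  next
    case False
    then have "x \<in> {0<..}" using x by simp
    have "p * y powr (p - 1) * (x - y) \<le> x powr p - y powr p"
    proof (rule convex_on_imp_above_tangent[where A = "{0<..}"])
      show "convex_on {0<..} (\<lambda>x. x powr p)" using powr_convex[OF p] .
      show "((\<lambda>x. x powr p) has_field_derivative p * y powr (p - 1)) (at y within {0<..})"
        using has_real_derivative_powr[OF y_pos] by (rule has_field_derivative_at_within)
    qed (use y_pos \<open>x \<in> {0<..}\<close> in \<open>auto simp: interior_open\<close>)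
    then show ?thesis by simp
  qed
qed

lemma powr_midpoint_le:
  fixes p x y :: real
  assumes "1 \<le> p" "0 \<le> x" "0 \<le> y"
  shows "((x + y) / 2) powr p \<le> (x powr p + y powr p) / 2"
proof -
  define m where "m = (x + y) / 2"
  define c where "c = p * m powr (p - 1)"
  have "m powr p + c * (x - m) \<le> x powr p" "m powr p + c * (y - m) \<le> y powr p"
    using powr_tangent_le[of p _ m] assms unfolding c_def m_def by simp_all
  moreover have "c * (x - m) + c * (y - m) = 0"
    unfolding m_def by (simp add: algebra_simps)
  ultimately have "2 * m powr p \<le> x powr p + y powr p" by linarith
  then show ?thesis unfolding m_def by simp
qed

lemma abs_diff_powr_le:
  fixes p x y :: real
  assumes "1 \<le> p"
  shows "\<bar>x - y\<bar> powr p \<le> 2 powr (p - 1) * (\<bar>x\<bar> powr p + \<bar>y\<bar> powr p)"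
proof -
  have "\<bar>x - y\<bar> powr p \<le> (2 * ((\<bar>x\<bar> + \<bar>y\<bar>) / 2)) powr p"
    using assms abs_triangle_ineq4[of x y] by (intro powr_mono2) auto
  also have "\<dots> = 2 powr p * ((\<bar>x\<bar> + \<bar>y\<bar>) / 2) powr p"
    by (rule powr_mult)
  also have "\<dots> \<le> 2 powr p * ((\<bar>x\<bar> powr p + \<bar>y\<bar> powr p) / 2)"
    using powr_midpoint_le assms by (intro mult_left_mono) auto
  also have "\<dots> = 2 powr (p - 1) * (\<bar>x\<bar> powr p + \<bar>y\<bar> powr p)"
    by (simp add: powr_diff)
  finally show ?thesis .
qed

lemma abs_le_1_plus_powr:
  fixes p x :: real
  assumes "1 \<le> p"
  shows "\<bar>x\<bar> \<le> 1 + \<bar>x\<bar> powr p"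
proof (cases "\<bar>x\<bar> \<le> 1")
  case True
  then show ?thesis using powr_ge_zero[of "\<bar>x\<bar>" p] by linarith
next
  case False
  then have "\<bar>x\<bar> powr 1 \<le> \<bar>x\<bar> powr p" using assms by (intro powr_mono) auto
  then show ?thesis using False by simp
qed

lemma summable_on_mult_weight_if_powr:
  fixes p :: real and f \<nu> :: "'a \<Rightarrow> real"
  assumes p: "1 \<le> p" and \<nu>: "\<forall>t\<in>V. 0 \<le> \<nu> t" "\<nu> summable_on V"
    and fp: "(\<lambda>t. \<bar>f t\<bar> powr p * \<nu> t) summable_on V"
  shows "(\<lambda>t. f t * \<nu> t) summable_on V"
proof -
  have "(\<lambda>t. \<bar>f t\<bar> * \<nu> t) summable_on V"
  proof (rule summable_on_comparison_test)
    show "(\<lambda>t. \<nu> t + \<bar>f t\<bar> powr p * \<nu> t) summable_on V"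
      using \<nu>(2) fp by (rule summable_on_add)
    show "\<bar>f t\<bar> * \<nu> t \<le> \<nu> t + \<bar>f t\<bar> powr p * \<nu> t" if "t \<in> V" for t
      using mult_right_mono[OF abs_le_1_plus_powr[OF p, of "f t"] \<nu>(1)[rule_format, OF that]]
      by (simp add: distrib_right)
  qed (use \<nu>(1) in auto)
  then have "(\<lambda>t. norm (f t * \<nu> t)) summable_on V"
    by (rule summable_on_cong[THEN iffD1, rotated]) (use \<nu>(1) in \<open>simp add: abs_mult\<close>)
  then show ?thesis using summable_on_iff_abs_summable_on_real by blast
qed

text \<open>Jensen's inequality for the weighted mean, via the tangent line of \<open>x powr p\<close> at the
  mean \<open>M\<close> of \<open>|f|\<close>.\<close>

lemma weighted_mean_powr_le:
  fixes p :: real and f \<nu> :: "'a \<Rightarrow> real"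
  assumes p: "1 \<le> p" and \<nu>: "\<forall>t\<in>V. 0 \<le> \<nu> t" "\<nu> summable_on V" "0 < infsum \<nu> V"
    and fp: "(\<lambda>t. \<bar>f t\<bar> powr p * \<nu> t) summable_on V"
  shows "\<bar>infsum (\<lambda>t. f t * \<nu> t) V / infsum \<nu> V\<bar> powr p * infsum \<nu> V
         \<le> infsum (\<lambda>t. \<bar>f t\<bar> powr p * \<nu> t) V"
proof -
  define N where "N = infsum \<nu> V"
  define M where "M = infsum (\<lambda>t. \<bar>f t\<bar> * \<nu> t) V / N"
  define c where "c = p * M powr (p - 1)"
  have N: "0 < N" using \<nu>(3) unfolding N_def .
  have fs: "(\<lambda>t. f t * \<nu> t) summable_on V"
    using p \<nu>(1,2) fp by (rule summable_on_mult_weight_if_powr)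
  have afs: "(\<lambda>t. \<bar>f t\<bar> * \<nu> t) summable_on V"
    using summable_on_mult_weight_if_powr[OF p \<nu>(1,2), of "\<lambda>t. \<bar>f t\<bar>"] fp by simp
  have "\<bar>infsum (\<lambda>t. f t * \<nu> t) V\<bar> \<le> infsum (\<lambda>t. \<bar>f t * \<nu> t\<bar>) V"
    using norm_infsum_bound[of "\<lambda>t. f t * \<nu> t" V] summable_on_iff_abs_summable_on_real[THEN iffD1, OF fs]
    by simp
  also have "\<dots> = infsum (\<lambda>t. \<bar>f t\<bar> * \<nu> t) V"
    by (rule infsum_cong) (use \<nu>(1) in \<open>simp add: abs_mult\<close>)
  finally have mean_le: "\<bar>infsum (\<lambda>t. f t * \<nu> t) V / N\<bar> \<le> M"
    unfolding M_def using N by (simp add: divide_right_mono)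
  then have "0 \<le> M" by linarith
  have "M powr p * N = infsum (\<lambda>t. (M powr p - c * M) * \<nu> t + c * (\<bar>f t\<bar> * \<nu> t)) V"
  proof -
    have "infsum (\<lambda>t. (M powr p - c * M) * \<nu> t + c * (\<bar>f t\<bar> * \<nu> t)) V
        = (M powr p - c * M) * N + c * (M * N)"
      using infsum_add[OF summable_on_cmult_right[OF \<nu>(2)] summable_on_cmult_right[OF afs]] N
      by (simp add: infsum_cmult_right' M_def N_def)
    then show ?thesis by (simp add: algebra_simps)
  qed
  also have "\<dots> \<le> infsum (\<lambda>t. \<bar>f t\<bar> powr p * \<nu> t) V"
  proof (rule infsum_mono)
    show "(\<lambda>t. (M powr p - c * M) * \<nu> t + c * (\<bar>f t\<bar> * \<nu> t)) summable_on V"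
      by (intro summable_on_add summable_on_cmult_right \<nu>(2) afs)
    show "(M powr p - c * M) * \<nu> t + c * (\<bar>f t\<bar> * \<nu> t) \<le> \<bar>f t\<bar> powr p * \<nu> t"
      if "t \<in> V" for t
      using mult_right_mono[OF powr_tangent_le[OF p abs_ge_zero[of "f t"] \<open>0 \<le> M\<close>] \<nu>(1)[rule_format, OF that]]
      unfolding c_def by (simp add: algebra_simps)
  qed (rule fp)
  finally have "M powr p * N \<le> infsum (\<lambda>t. \<bar>f t\<bar> powr p * \<nu> t) V" .
  moreover have "\<bar>infsum (\<lambda>t. f t * \<nu> t) V / N\<bar> powr p * N \<le> M powr p * N"
    using mean_le p N by (intro mult_right_mono powr_mono2) auto
  ultimately show ?thesis unfolding N_def by linarith
qed

lemma weighted_mean_deviation_powr_le: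
  fixes p :: real and f \<nu> :: "'a \<Rightarrow> real"
  assumes p: "1 \<le> p" and \<nu>: "\<forall>t\<in>V. 0 \<le> \<nu> t" "\<nu> summable_on V" "0 < infsum \<nu> V"
    and fp: "(\<lambda>t. \<bar>f t\<bar> powr p * \<nu> t) summable_on V"
  defines "m \<equiv> infsum (\<lambda>t. f t * \<nu> t) V / infsum \<nu> V"
  shows "(\<lambda>t. \<bar>f t - m\<bar> powr p * \<nu> t) summable_on V"
    and "infsum (\<lambda>t. \<bar>f t - m\<bar> powr p * \<nu> t) V \<le> 2 powr p * infsum (\<lambda>t. \<bar>f t\<bar> powr p * \<nu> t) V"
proof -
  define A where "A = infsum (\<lambda>t. \<bar>f t\<bar> powr p * \<nu> t) V"
  define g where "g t = 2 powr (p - 1) * (\<bar>f t\<bar> powr p * \<nu> t + \<bar>m\<bar> powr p * \<nu> t)" for t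
  have g_summable: "g summable_on V"
    unfolding g_def by (intro summable_on_cmult_right summable_on_add fp \<nu>(2))
  have le_g: "\<bar>f t - m\<bar> powr p * \<nu> t \<le> g t" if "t \<in> V" for t
    using mult_right_mono[OF abs_diff_powr_le[OF p, of "f t" m] \<nu>(1)[rule_format, OF that]]
    unfolding g_def by (simp add: algebra_simps)
  show summable: "(\<lambda>t. \<bar>f t - m\<bar> powr p * \<nu> t) summable_on V"
    by (rule summable_on_comparison_test[OF g_summable le_g]) (use \<nu>(1) in auto)
  have "infsum (\<lambda>t. \<bar>f t - m\<bar> powr p * \<nu> t) V \<le> infsum g V"
    using summable g_summable le_g by (rule infsum_mono)
  also have "\<dots> = 2 powr (p - 1) * (A + \<bar>m\<bar> powr p * infsum \<nu> V)"
    unfolding g_def A_def infsum_cmult_right' infsum_add[OF fp summable_on_cmult_right[OF \<nu>(2)]] ..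
  also have "\<dots> \<le> 2 powr (p - 1) * (2 * A)"
  proof -
    have "\<bar>m\<bar> powr p * infsum \<nu> V \<le> A"
      using weighted_mean_powr_le[OF p \<nu> fp] unfolding m_def A_def .
    then show ?thesis by (intro mult_left_mono) auto
  qed
  also have "\<dots> = 2 powr p * A"
    by (simp add: powr_diff)
  finally show "infsum (\<lambda>t. \<bar>f t - m\<bar> powr p * \<nu> t) V \<le> 2 powr p * A" .
qed

lemma infsum_ennreal:
  fixes f :: "'a \<Rightarrow> real"
  assumes "f summable_on A" "\<And>x. x \<in> A \<Longrightarrow> 0 \<le> f x"
  shows "(\<Sum>\<^sub>\<infinity>x\<in>A. ennreal (f x)) = ennreal (\<Sum>\<^sub>\<infinity>x\<in>A. f x)"
proof -
  have "infsum (ennreal \<circ> f) A = ennreal (infsum f A)"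
  proof (rule infsum_comm_additive_general)
    show "sum (ennreal \<circ> f) F = ennreal (sum f F)" if "finite F" "F \<subseteq> A" for F
      using that assms(2) by (metis (mono_tags, lifting) comp_def subsetD sum.cong sum_ennreal)
  qed (use assms in auto)
  then show ?thesis by (simp add: comp_def)
qed

lemma summable_on_if_infsum_ennreal_less_top:
  fixes f :: "'a \<Rightarrow> real"
  assumes nonneg: "\<And>x. x \<in> A \<Longrightarrow> 0 \<le> f x" and finite: "(\<Sum>\<^sub>\<infinity>x\<in>A. ennreal (f x)) < \<infinity>"
  shows "f summable_on A"
proof (rule nonneg_bdd_above_summable_on)
  let ?S = "\<Sum>\<^sub>\<infinity>x\<in>A. ennreal (f x)"
  show "bdd_above (sum f ` {F. F \<subseteq> A \<and> finite F})"
  proof (rule bdd_aboveI2)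
    fix F assume F: "F \<in> {F. F \<subseteq> A \<and> finite F}"
    have "ennreal (sum f F) = (\<Sum>\<^sub>\<infinity>x\<in>F. ennreal (f x))"
      using F nonneg by (simp add: subset_iff sum_ennreal)
    also have "\<dots> \<le> ?S"
      by (rule infsum_mono_neutral) (use F in \<open>auto simp: nonneg_summable_on_complete\<close>)
    finally have "enn2real (ennreal (sum f F)) \<le> enn2real ?S"
      using finite by (intro enn2real_mono) auto
    moreover have "0 \<le> sum f F" using F nonneg by (intro sum_nonneg) auto
    ultimately show "sum f F \<le> enn2real ?S" by simp
  qed
qed (use nonneg in auto)

lemma ennreal_weighted_mean_deviation_powr_le:
  fixes p c :: real and b \<nu> :: "'a \<Rightarrow> real"
  assumes p: "1 \<le> p" and \<nu>: "\<forall>t\<in>V. 0 \<le> \<nu> t" "\<nu> summable_on V" "0 < infsum \<nu> V"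
  shows "(\<Sum>\<^sub>\<infinity>t\<in>V. ennreal (\<bar>b t - infsum (\<lambda>t. b t * \<nu> t) V / infsum \<nu> V\<bar> powr p * \<nu> t))
         \<le> ennreal (2 powr p) * (\<Sum>\<^sub>\<infinity>t\<in>V. ennreal (\<bar>b t - c\<bar> powr p * \<nu> t))"
proof (cases "(\<Sum>\<^sub>\<infinity>t\<in>V. ennreal (\<bar>b t - c\<bar> powr p * \<nu> t)) = \<infinity>")
  case True
  then show ?thesis by (simp add: ennreal_mult_top)
next
  case False
  define f where "f t = b t - c" for t
  define m where "m = infsum (\<lambda>t. f t * \<nu> t) V / infsum \<nu> V"
  have fp: "(\<lambda>t. \<bar>f t\<bar> powr p * \<nu> t) summable_on V"
    by (rule summable_on_if_infsum_ennreal_less_top) (use \<nu>(1) False in \<open>auto simp: f_def top.not_eq_extremum\<close>)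
  have "infsum (\<lambda>t. b t * \<nu> t) V = infsum (\<lambda>t. f t * \<nu> t + c * \<nu> t) V"
    by (simp add: f_def algebra_simps)
  also have "\<dots> = infsum (\<lambda>t. f t * \<nu> t) V + c * infsum \<nu> V"
    using summable_on_mult_weight_if_powr[OF p \<nu>(1,2) fp] summable_on_cmult_right[OF \<nu>(2)]
    by (simp add: infsum_add infsum_cmult_right')
  finally have b_minus_mean: "b t - infsum (\<lambda>t. b t * \<nu> t) V / infsum \<nu> V = f t - m" for t
    using \<nu>(3) unfolding m_def f_def by (simp add: field_simps)
  note deviation = weighted_mean_deviation_powr_le[OF p \<nu> fp, folded m_def]
  have "(\<Sum>\<^sub>\<infinity>t\<in>V. ennreal (\<bar>b t - infsum (\<lambda>t. b t * \<nu> t) V / infsum \<nu> V\<bar> powr p * \<nu> t))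
      = ennreal (infsum (\<lambda>t. \<bar>f t - m\<bar> powr p * \<nu> t) V)"
    unfolding b_minus_mean using deviation(1) \<nu>(1) by (simp add: infsum_ennreal)
  also have "\<dots> \<le> ennreal (2 powr p * infsum (\<lambda>t. \<bar>f t\<bar> powr p * \<nu> t) V)"
    using deviation(2) by (rule ennreal_leI)
  also have "\<dots> = ennreal (2 powr p) * (\<Sum>\<^sub>\<infinity>t\<in>V. ennreal (\<bar>b t - c\<bar> powr p * \<nu> t))"
    using fp \<nu>(1) by (simp add: ennreal_mult infsum_ennreal infsum_nonneg f_def)
  finally show ?thesis .
qed

lemma tree_poincare_from_hardy:
  fixes p C :: real and \<nu> \<mu> b :: "'a \<Rightarrow> real"
  assumes p: "1 \<le> p" and C: "0 \<le> C" and rt: "rooted_tree V E t0"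
    and \<nu>_pos: "\<forall>t\<in>V. 0 < \<nu> t" and \<nu>_summable: "\<nu> summable_on V"
    and hardy: "\<And>d. (\<Sum>\<^sub>\<infinity>t\<in>V. ennreal (\<nu> t * \<bar>\<Sum>u\<in>{u\<in>V. tree_less E t0 t0 u \<and> tree_le E t0 u t}. d u\<bar> powr p))
                    \<le> ennreal (C powr p) * (\<Sum>\<^sub>\<infinity>t\<in>V. ennreal (\<mu> t * \<bar>d t\<bar> powr p))"
  shows "(\<Sum>\<^sub>\<infinity>t\<in>V. ennreal (\<bar>b t - (\<Sum>\<^sub>\<infinity>t\<in>V. b t * \<nu> t) / (\<Sum>\<^sub>\<infinity>t\<in>V. \<nu> t)\<bar> powr p * \<nu> t))
         \<le> ennreal ((2 * C + 1) powr p) *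
           (\<Sum>\<^sub>\<infinity>t\<in>{t\<in>V. tree_less E t0 t0 t}. ennreal (\<bar>b t - b (tree_parent E t0 t)\<bar> powr p * \<mu> t))"
proof -
  define V' where "V' = {t\<in>V. tree_less E t0 t0 t}"
  define d where "d u = (if u \<in> V' then b u - b (tree_parent E t0 u) else 0)" for u
  let ?R = "\<Sum>\<^sub>\<infinity>t\<in>V'. ennreal (\<bar>b t - b (tree_parent E t0 t)\<bar> powr p * \<mu> t)"
  have "t0 \<in> V" using rt unfolding rooted_tree_def by simp
  then have "\<nu> t0 \<le> infsum \<nu> V"
    using finite_sum_le_infsum[OF \<nu>_summable, of "{t0}"] \<nu>_pos by (simp add: less_imp_le)
  then have \<nu>_total_pos: "0 < infsum \<nu> V" using \<nu>_pos \<open>t0 \<in> V\<close> by fastforce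
  have "(\<Sum>\<^sub>\<infinity>t\<in>V. ennreal (\<bar>b t - b t0\<bar> powr p * \<nu> t))
      = (\<Sum>\<^sub>\<infinity>t\<in>V. ennreal (\<nu> t * \<bar>\<Sum>u\<in>{u\<in>V. tree_less E t0 t0 u \<and> tree_le E t0 u t}. d u\<bar> powr p))"
  proof (rule infsum_cong)
    fix t assume "t \<in> V"
    have "(\<Sum>u\<in>{u\<in>V. tree_less E t0 t0 u \<and> tree_le E t0 u t}. d u)
        = (\<Sum>u\<in>{u\<in>V. tree_less E t0 t0 u \<and> tree_le E t0 u t}. b u - b (tree_parent E t0 u))"
      by (rule sum.cong) (auto simp: d_def V'_def)
    then show "ennreal (\<bar>b t - b t0\<bar> powr p * \<nu> t)
        = ennreal (\<nu> t * \<bar>\<Sum>u\<in>{u\<in>V. tree_less E t0 t0 u \<and> tree_le E t0 u t}. d u\<bar> powr p)"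
      using sum_parent_differences_to_root[OF rt \<open>t \<in> V\<close>, of b] by (simp add: mult.commute)
  qed
  also have "\<dots> \<le> ennreal (C powr p) * (\<Sum>\<^sub>\<infinity>t\<in>V. ennreal (\<mu> t * \<bar>d t\<bar> powr p))"
    by (rule hardy)
  also have "(\<Sum>\<^sub>\<infinity>t\<in>V. ennreal (\<mu> t * \<bar>d t\<bar> powr p)) = ?R"
    by (rule infsum_cong_neutral) (auto simp: d_def V'_def mult.commute)
  finally have hardy_d: "(\<Sum>\<^sub>\<infinity>t\<in>V. ennreal (\<bar>b t - b t0\<bar> powr p * \<nu> t)) \<le> ennreal (C powr p) * ?R" .
  have "(\<Sum>\<^sub>\<infinity>t\<in>V. ennreal (\<bar>b t - (\<Sum>\<^sub>\<infinity>t\<in>V. b t * \<nu> t) / (\<Sum>\<^sub>\<infinity>t\<in>V. \<nu> t)\<bar> powr p * \<nu> t))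
      \<le> ennreal (2 powr p) * (\<Sum>\<^sub>\<infinity>t\<in>V. ennreal (\<bar>b t - b t0\<bar> powr p * \<nu> t))"
    using p \<nu>_pos \<nu>_summable \<nu>_total_pos
    by (intro ennreal_weighted_mean_deviation_powr_le) (auto simp: less_imp_le)
  also have "\<dots> \<le> ennreal (2 powr p) * (ennreal (C powr p) * ?R)"
    using hardy_d by (rule mult_left_mono) simp
  also have "\<dots> = ennreal ((2 * C) powr p) * ?R"
    by (simp add: ennreal_mult powr_mult mult.assoc)
  also have "\<dots> \<le> ennreal ((2 * C + 1) powr p) * ?R"
    using C p by (intro mult_right_mono ennreal_leI powr_mono2) auto
  finally show ?thesis unfolding V'_def .
qed

theorem lemma2p1:
  fixes p C :: real
  assumes "1 \<le> p" and "0 \<le> C"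
  shows "\<exists>CP\<ge>0. \<forall>(V::'a set) E t0 (\<nu>::'a \<Rightarrow> real) (\<mu>::'a \<Rightarrow> real).
     rooted_tree V E t0 \<and>
     (\<forall>t\<in>V. 0 < \<nu> t) \<and> (\<forall>t\<in>V. 0 < \<mu> t) \<and>
     \<nu> summable_on V \<and> \<mu> summable_on V \<and>
     (\<forall>b::'a \<Rightarrow> real.
        (\<Sum>\<^sub>\<infinity>t\<in>V. ennreal (\<nu> t * \<bar>\<Sum>u\<in>{u\<in>V. tree_less E t0 t0 u \<and> tree_le E t0 u t}. b u\<bar> powr p))
        \<le> ennreal (C powr p) * (\<Sum>\<^sub>\<infinity>t\<in>V. ennreal (\<mu> t * \<bar>b t\<bar> powr p)))
     \<longrightarrow>
     (\<forall>b::'a \<Rightarrow> real.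
        let bbar = (\<Sum>\<^sub>\<infinity>t\<in>V. b t * \<nu> t) / (\<Sum>\<^sub>\<infinity>t\<in>V. \<nu> t) in
        (\<Sum>\<^sub>\<infinity>t\<in>V. ennreal (\<bar>b t - bbar\<bar> powr p * \<nu> t))
        \<le> ennreal (CP powr p) *
          (\<Sum>\<^sub>\<infinity>t\<in>{t\<in>V. tree_less E t0 t0 t}. ennreal (\<bar>b t - b (tree_parent E t0 t)\<bar> powr p * \<mu> t)))"
proof (intro exI[of _ "2 * C + 1"] conjI allI impI)
  show "0 \<le> 2 * C + 1" using assms(2) by simp
qed (auto simp: Let_def intro!: tree_poincare_from_hardy[OF assms])

end
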